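(* Let $d$ be a positive integer, $P$ a finite poset and $c\ge 0$. (i) If $\limsup_{k\to\infty}\frac{La([k]^d,P)}{w_{k,d}}\le c$, then $\limsup_{n\to\infty}\frac{La(n,P)}{\binom{n}{\lfloor n/2\rfloor}}\le c$. (ii) If $\limsup_{k\to\infty}\frac{La^*([k]^d,P)}{w_{k,d}}\le c$, then $\limsup_{n\to\infty}\frac{La^*(n,P)}{\binom{n}{\lfloor n/2\rfloor}}\le c$.
   Context: $[k]^d=\{1,\dots,k\}^d$ ordered coordinatewise; $w_{k,d}$ is the size of a largest antichain in $[k]^d$. For posets $P,R$: $P$ is a weak subposet of $R$ if there is an injection $i:P\to R$ with $p\le_P p'\Rightarrow i(p)\le_R i(p')$; it is a strong subposet if moreover $p\le_P p'\iff i(p)\le_R i(p')$. A subset of a poset is weak (strong) $P$-free if, with the induced order, it does not contain $P$ as a weak (strong) subposet. $La(Q,P)$ and $La^*(Q,P)$ denote the maximum size of a weak, respectively strong, $P$-free subset of the poset $Q$. $La(n,P)=La(Q_n,P)$ and $La^*(n,P)=La^*(Q_n,P)$, where $Q_n$ is the poset of all subsets of an $n$-element set ordered by inclusion. *)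

theory Defs
  imports Main "HOL-Library.Extended_Real" "HOL-Library.Liminf_Limsup"
begin

definition finite_poset :: "'a set \<Rightarrow> ('a \<Rightarrow> 'a \<Rightarrow> bool) \<Rightarrow> bool" where
  "finite_poset A le \<longleftrightarrow> finite A \<and>
     (\<forall>x\<in>A. le x x) \<and>
     (\<forall>x\<in>A. \<forall>y\<in>A. le x y \<and> le y x \<longrightarrow> x = y) \<and>
     (\<forall>x\<in>A. \<forall>y\<in>A. \<forall>z\<in>A. le x y \<and> le y z \<longrightarrow> le x z)"

definition weak_subposet :: "'a set \<Rightarrow> ('a \<Rightarrow> 'a \<Rightarrow> bool) \<Rightarrow> 'b set \<Rightarrow> ('b \<Rightarrow> 'b \<Rightarrow> bool) \<Rightarrow> bool" where
  "weak_subposet A leA B leB \<longleftrightarrow> (\<exists>i. inj_on i A \<and> i ` A \<subseteq> B \<and>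
     (\<forall>p\<in>A. \<forall>p'\<in>A. leA p p' \<longrightarrow> leB (i p) (i p')))"

definition strong_subposet :: "'a set \<Rightarrow> ('a \<Rightarrow> 'a \<Rightarrow> bool) \<Rightarrow> 'b set \<Rightarrow> ('b \<Rightarrow> 'b \<Rightarrow> bool) \<Rightarrow> bool" where
  "strong_subposet A leA B leB \<longleftrightarrow> (\<exists>i. inj_on i A \<and> i ` A \<subseteq> B \<and>
     (\<forall>p\<in>A. \<forall>p'\<in>A. leA p p' \<longleftrightarrow> leB (i p) (i p')))"

definition La_poset :: "'b set \<Rightarrow> ('b \<Rightarrow> 'b \<Rightarrow> bool) \<Rightarrow> 'a set \<Rightarrow> ('a \<Rightarrow> 'a \<Rightarrow> bool) \<Rightarrow> nat" where
  "La_poset Q leQ P leP = Sup (card ` {F. F \<subseteq> Q \<and> \<not> weak_subposet P leP F leQ})"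

definition La_star_poset :: "'b set \<Rightarrow> ('b \<Rightarrow> 'b \<Rightarrow> bool) \<Rightarrow> 'a set \<Rightarrow> ('a \<Rightarrow> 'a \<Rightarrow> bool) \<Rightarrow> nat" where
  "La_star_poset Q leQ P leP = Sup (card ` {F. F \<subseteq> Q \<and> \<not> strong_subposet P leP F leQ})"

definition grid :: "nat \<Rightarrow> nat \<Rightarrow> nat list set" where
  "grid k d = {x. length x = d \<and> set x \<subseteq> {1..k}}"

definition grid_le :: "nat list \<Rightarrow> nat list \<Rightarrow> bool" where
  "grid_le x y \<longleftrightarrow> list_all2 (\<le>) x y"

definition cube :: "nat \<Rightarrow> nat set set" where
  "cube n = Pow {0..<n}"

definition antichain_in :: "('b \<Rightarrow> 'b \<Rightarrow> bool) \<Rightarrow> 'b set \<Rightarrow> bool" where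
  "antichain_in le S \<longleftrightarrow> (\<forall>x\<in>S. \<forall>y\<in>S. x \<noteq> y \<longrightarrow> \<not> le x y)"

definition width_grid :: "nat \<Rightarrow> nat \<Rightarrow> nat" where
  "width_grid k d = Sup (card ` {S. S \<subseteq> grid k d \<and> antichain_in grid_le S})"

definition La :: "nat \<Rightarrow> 'a set \<Rightarrow> ('a \<Rightarrow> 'a \<Rightarrow> bool) \<Rightarrow> nat" where
  "La n P leP = La_poset (cube n) (\<subseteq>) P leP"

definition La_star :: "nat \<Rightarrow> 'a set \<Rightarrow> ('a \<Rightarrow> 'a \<Rightarrow> bool) \<Rightarrow> nat" where
  "La_star n P leP = La_star_poset (cube n) (\<subseteq>) P leP"

end

theory Submission
  imports Defs "HOL-Combinatorics.Permutations" "HOL-Probability.Hoeffding" "HOL-Real_Asymp.Real_Asymp"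
begin

(*
  Embed the grid [k]^d, with k about n/(4d), into the middle levels of Q_n by an order embedding
  that shifts ranks by a constant, and average over all permutations of the ground set as in
  Lubell's proof of the LYM inequality: every permuted copy pulls a P-free family F back to a P-free
  subset of the grid, whence the sum over S in F of N(|S|) / binom(n, |S|) is at most La([k]^d, P),
  where N(s) is the size of the grid level sent to level s of Q_n.  By a symmetric chain
  decomposition the width w_{k,d} is the size of the middle level, and the level sizes of [k]^d
  change slowly, so all levels within eps k/d of the middle have at least (1 - eps) w_{k,d}
  elements.  Sets of F whose size is farther from n/2 are negligible by Hoeffding's inequality,
  hence |F| <= (La([k]^d, P)/w_{k,d} + O(eps)) binom(n, n/2).
*)

section \<open>Grids, levels and a symmetric chain decomposition\<close>

lemma Cons_in_grid_iff: "y # x \<in> grid k (Suc d) \<longleftrightarrow> y \<in> {1..k} \<and> x \<in> grid k d"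
  by (auto simp: grid_def)

lemma grid_Suc_E:
  assumes "x \<in> grid k (Suc d)"
  obtains y x' where "x = y # x'" "y \<in> {1..k}" "x' \<in> grid k d"
  using assms by (cases x) (auto simp: grid_def)

lemma grid_eq_lists: "grid k d = {x. set x \<subseteq> {1..k} \<and> length x = d}"
  by (auto simp: grid_def)

lemma finite_grid: "finite (grid k d)"
  by (simp add: grid_eq_lists finite_lists_length_eq)

lemma card_grid: "card (grid k d) = k ^ d"
  by (simp add: grid_eq_lists card_lists_length_eq)

lemma grid_le_Cons_iff: "grid_le (a # x) (b # y) \<longleftrightarrow> a \<le> b \<and> grid_le x y"
  by (simp add: grid_le_def)

lemma grid_le_imp_sum_list_le: "grid_le x y \<Longrightarrow> sum_list x \<le> sum_list y"
  unfolding grid_le_def by (induction x y rule: list_all2_induct) auto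

lemma grid_le_sum_list_eq_imp_eq:
  assumes "grid_le x y" "sum_list x = sum_list y"
  shows "x = y"
  using assms unfolding grid_le_def
proof (induction x y rule: list_all2_induct)
  case (Cons a x b y)
  then have "sum_list x \<le> sum_list y"
    using grid_le_imp_sum_list_le grid_le_def by blast
  with Cons show ?case by simp
qed simp

lemma sum_list_grid_bounds: "x \<in> grid k d \<Longrightarrow> d \<le> sum_list x \<and> sum_list x \<le> d * k"
proof (induction x arbitrary: d)
  case (Cons y x)
  then obtain d' where "d = Suc d'" "y \<in> {1..k}" "x \<in> grid k d'"
    by (cases d) (auto simp: grid_def)
  with Cons.IH[of d'] show ?case by auto
qed (simp add: grid_def)

definition grid_level :: "nat \<Rightarrow> nat \<Rightarrow> int \<Rightarrow> nat list set" where
  "grid_level k d r = {x \<in> grid k d. int (sum_list x) = r}"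

lemma finite_grid_level: "finite (grid_level k d r)"
  by (simp add: grid_level_def finite_grid)

lemma antichain_grid_level: "antichain_in grid_le (grid_level k d r)"
  unfolding antichain_in_def grid_level_def using grid_le_sum_list_eq_imp_eq by fastforce

lemma bdd_above_card_antichains: "bdd_above (card ` {S. S \<subseteq> grid k d \<and> antichain_in grid_le S})"
  by (rule bdd_aboveI[where M = "card (grid k d)"]) (auto intro: card_mono finite_grid)

lemma card_grid_level_le_width_grid: "card (grid_level k d r) \<le> width_grid k d"
proof -
  have "grid_level k d r \<in> {S. S \<subseteq> grid k d \<and> antichain_in grid_le S}"
    using antichain_grid_level by (auto simp: grid_level_def)
  then show ?thesis
    unfolding width_grid_def by (intro cSup_upper bdd_above_card_antichains imageI)
qed

text \<open>
  A symmetric chain decomposition of \<open>[k]^d\<close> (de Bruijn et al.). The chains are indexed by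
  the lists \<open>j \<in> scd_index k d\<close>; the chain \<open>j\<close> consists of the points \<open>scd_chain k j q\<close> of
  rank \<open>d + q\<close> for \<open>sum_list j \<le> q \<le> d*(k-1) - sum_list j\<close>. A chain \<open>C\<close> of \<open>[k]^d\<close> with
  \<open>L + 1\<close> elements gives the hook-shaped chains \<open>i < min k (L + 1)\<close> of \<open>[k] \<times> C\<close>:
  from \<open>(i+1, C\<^sub>0)\<close> up to \<open>(i+1, C\<^sub>L\<^sub>-\<^sub>i)\<close>, then up to \<open>(k, C\<^sub>L\<^sub>-\<^sub>i)\<close>.
\<close>

fun scd_index :: "nat \<Rightarrow> nat \<Rightarrow> nat list set" where
  "scd_index k 0 = {[]}"
| "scd_index k (Suc d) = {i # j | i j. j \<in> scd_index k d \<and> i < k \<and> i + 2 * sum_list j \<le> d * (k - 1)}"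

fun scd_chain :: "nat \<Rightarrow> nat list \<Rightarrow> nat \<Rightarrow> nat list" where
  "scd_chain k [] q = []"
| "scd_chain k (i # j) q =
     (let top = length j * (k - 1) - sum_list j in Suc (i + (q - top)) # scd_chain k j (min q top - i))"

lemma scd_index_length: "j \<in> scd_index k d \<Longrightarrow> length j = d"
  by (induction d arbitrary: j) auto

lemma scd_index_sum_list: "j \<in> scd_index k d \<Longrightarrow> 2 * sum_list j \<le> d * (k - 1)"
proof (induction d arbitrary: j)
  case (Suc d)
  then obtain i j' where j: "j = i # j'" "i \<le> k - 1" "i + 2 * sum_list j' \<le> d * (k - 1)"
    by auto
  then have "2 * sum_list j = (i + 2 * sum_list j') + i"
    by simp
  also have "\<dots> \<le> d * (k - 1) + (k - 1)"
    using add_mono[OF j(3,2)] .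
  finally show ?case
    by simp
qed simp

lemma scd_index_Suc_E:
  assumes "j \<in> scd_index k (Suc d)"
  obtains i j' where "j = i # j'" "j' \<in> scd_index k d" "i < k" "i + 2 * sum_list j' \<le> d * (k - 1)"
  using assms by auto

lemma scd_chain_Cons:
  assumes "j \<in> scd_index k d"
  shows "scd_chain k (i # j) q =
    Suc (i + (q - (d * (k - 1) - sum_list j))) # scd_chain k j (min q (d * (k - 1) - sum_list j) - i)"
  using scd_index_length[OF assms] by (simp add: Let_def)

lemma scd_chain_tail_range:
  fixes D s i q :: nat
  assumes "i + 2 * s \<le> D" "i + s \<le> q"
  shows "s \<le> min q (D - s) - i" "min q (D - s) - i + s \<le> D"
  using assms by auto

lemma scd_chain_in_grid:
  assumes "j \<in> scd_index k d" "sum_list j \<le> q" "q + sum_list j \<le> d * (k - 1)"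
  shows "scd_chain k j q \<in> grid k d \<and> sum_list (scd_chain k j q) = d + q"
  using assms
proof (induction d arbitrary: j q)
  case (Suc d)
  from Suc.prems(1) obtain i j' where j: "j = i # j'" "j' \<in> scd_index k d"
    "i < k" "i + 2 * sum_list j' \<le> d * (k - 1)"
    by (rule scd_index_Suc_E)
  define D where "D = d * (k - 1)"
  define top where "top = D - sum_list j'"
  have q: "i + sum_list j' \<le> q" "q + (i + sum_list j') \<le> D + (k - 1)"
    using Suc.prems(2,3) by (simp_all add: j(1) D_def)
  note tail = scd_chain_tail_range[OF j(4)[folded D_def] q(1)]
  have "scd_chain k j' (min q top - i) \<in> grid k d \<and>
      sum_list (scd_chain k j' (min q top - i)) = d + (min q top - i)"
    using Suc.IH[OF j(2) tail[folded top_def, unfolded D_def]] by simp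
  moreover have "Suc (i + (q - top)) \<in> {1..k}"
  proof -
    have "q - top \<le> (k - 1) - i"
      using q j(3) by (simp add: top_def)
    then show ?thesis
      using j(3) by simp
  qed
  moreover have "Suc (i + (q - top)) + (d + (min q top - i)) = Suc d + q"
  proof -
    have "i \<le> min q top"
      using q(1) j(4) by (simp add: top_def D_def)
    moreover have "q - top + min q top = q"
      by simp
    ultimately show ?thesis
      by linarith
  qed
  ultimately show ?case
    unfolding j(1) scd_chain_Cons[OF j(2), folded D_def, folded top_def]
    by (simp add: Cons_in_grid_iff)
qed (simp add: grid_def)

lemma scd_chain_mono:
  assumes "j \<in> scd_index k d" "sum_list j \<le> q" "q \<le> q'" "q' + sum_list j \<le> d * (k - 1)"
  shows "grid_le (scd_chain k j q) (scd_chain k j q')"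
  using assms
proof (induction d arbitrary: j q q')
  case 0
  then show ?case by (simp add: grid_le_def)
next
  case (Suc d)
  from Suc.prems(1) obtain i j' where j: "j = i # j'" "j' \<in> scd_index k d"
    "i < k" "i + 2 * sum_list j' \<le> d * (k - 1)"
    by (rule scd_index_Suc_E)
  define D where "D = d * (k - 1)"
  define top where "top = D - sum_list j'"
  have q: "i + sum_list j' \<le> q"
    using Suc.prems(2) by (simp add: j(1))
  note tail = scd_chain_tail_range[OF j(4)[folded D_def] q]
  have "min q top \<le> min q' top"
    using Suc.prems(3) by simp
  then have le: "min q top - i \<le> min q' top - i"
    by (rule diff_le_mono)
  have "min q' top - i + sum_list j' \<le> D"
    using scd_chain_tail_range(2)[OF j(4)[folded D_def]] q Suc.prems(3) by (simp add: top_def)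
  then have "grid_le (scd_chain k j' (min q top - i)) (scd_chain k j' (min q' top - i))"
    using Suc.IH[OF j(2) tail(1)[folded top_def] le] by (simp add: D_def)
  then show ?case
    using Suc.prems(3) unfolding j(1) scd_chain_Cons[OF j(2)]
    by (simp add: grid_le_Cons_iff top_def D_def)
qed

lemma scd_chain_surj:
  assumes "x \<in> grid k d"
  shows "\<exists>j \<in> scd_index k d. \<exists>q. sum_list j \<le> q \<and> q + sum_list j \<le> d * (k - 1) \<and> x = scd_chain k j q"
  using assms
proof (induction d arbitrary: x)
  case 0
  then show ?case by (simp add: grid_def)
next
  case (Suc d)
  from Suc.prems obtain y x' where x: "x = y # x'" "y \<in> {1..k}" "x' \<in> grid k d"
    by (rule grid_Suc_E)
  from Suc.IH[OF x(3)] obtain j' q' where j': "j' \<in> scd_index k d" "sum_list j' \<le> q'"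
    "q' + sum_list j' \<le> d * (k - 1)" "x' = scd_chain k j' q'"
    by blast
  define D where "D = d * (k - 1)"
  define top where "top = D - sum_list j'"
  \<comment> \<open>\<open>x\<close> lies on the vertical leg of hook \<open>y - 1\<close> or on the horizontal leg of hook \<open>top - q'\<close>.\<close>
  define i where "i = min (y - 1) (top - q')"
  define q where "q = q' + (y - 1)"
  have qtop: "q' \<le> top"
    using j'(3) by (simp add: top_def D_def)
  have "i + 2 * sum_list j' \<le> D" "i < k"
    using j'(2,3) x(2) by (auto simp: i_def top_def D_def)
  then have idx: "i # j' \<in> scd_index k (Suc d)"
    using j'(1) by (auto simp: D_def)
  have "Suc d * (k - 1) = D + (k - 1)"
    by (simp add: D_def)
  then have range: "sum_list (i # j') \<le> q" "q + sum_list (i # j') \<le> Suc d * (k - 1)"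
    using j'(2,3) x(2) by (auto simp: i_def q_def top_def D_def)
  have "Suc (i + (q - top)) = y \<and> min q top - i = q'"
  proof (cases "y - 1 \<le> top - q'")
    case True
    then show ?thesis
      using x(2) qtop by (simp add: i_def q_def)
  next
    case False
    then show ?thesis
      using x(2) qtop by (simp add: i_def q_def)
  qed
  then have "x = scd_chain k (i # j') q"
    unfolding scd_chain_Cons[OF j'(1), folded D_def, folded top_def] x(1) j'(4) by simp
  with idx range show ?case
    by blast
qed

lemma scd_chain_inj:
  assumes "j \<in> scd_index k d" "sum_list j \<le> q" "q + sum_list j \<le> d * (k - 1)"
    and "j' \<in> scd_index k d" "sum_list j' \<le> q'" "q' + sum_list j' \<le> d * (k - 1)"
    and "scd_chain k j q = scd_chain k j' q'"
  shows "j = j' \<and> q = q'"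
  using assms
proof (induction d arbitrary: j j' q q')
  case (Suc d)
  have q: "q = q'"
    using scd_chain_in_grid[OF Suc.prems(1-3)] scd_chain_in_grid[OF Suc.prems(4-6)] Suc.prems(7)
    by simp
  from Suc.prems(1) obtain i j1 where j: "j = i # j1" "j1 \<in> scd_index k d"
    "i < k" "i + 2 * sum_list j1 \<le> d * (k - 1)"
    by (rule scd_index_Suc_E)
  from Suc.prems(4) obtain i' j1' where j': "j' = i' # j1'" "j1' \<in> scd_index k d"
    "i' < k" "i' + 2 * sum_list j1' \<le> d * (k - 1)"
    by (rule scd_index_Suc_E)
  define top where "top = d * (k - 1) - sum_list j1"
  define top' where "top' = d * (k - 1) - sum_list j1'"
  have q1: "i + sum_list j1 \<le> q" "i' + sum_list j1' \<le> q"
    using Suc.prems(2,5) q by (simp_all add: j(1) j'(1))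
  have eq: "Suc (i + (q - top)) = Suc (i' + (q - top'))"
    "scd_chain k j1 (min q top - i) = scd_chain k j1' (min q top' - i')"
    using Suc.prems(7) unfolding q j(1) j'(1) scd_chain_Cons[OF j(2)] scd_chain_Cons[OF j'(2)]
    by (simp_all add: top_def top'_def)
  have "j1 = j1'"
    using Suc.IH[OF j(2) scd_chain_tail_range[OF j(4) q1(1)] j'(2) scd_chain_tail_range[OF j'(4) q1(2)]]
      eq(2) by (simp add: top_def top'_def)
  then show ?case
    using eq(1) q j(1) j'(1) by (simp add: top_def top'_def)
qed simp

lemma scd_chain_comparable:
  assumes "j \<in> scd_index k d" "sum_list j \<le> q" "q + sum_list j \<le> d * (k - 1)"
    and "sum_list j \<le> q'" "q' + sum_list j \<le> d * (k - 1)"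
  shows "grid_le (scd_chain k j q) (scd_chain k j q') \<or> grid_le (scd_chain k j q') (scd_chain k j q)"
proof (cases "q \<le> q'")
  case True
  then show ?thesis
    using scd_chain_mono[OF assms(1,2) True assms(5)] by simp
next
  case False
  then show ?thesis
    using scd_chain_mono[OF assms(1,4) _ assms(3)] by simp
qed

lemma card_antichain_le_middle_level:
  assumes "S \<subseteq> grid k d" "antichain_in grid_le S"
  shows "card S \<le> card (grid_level k d (int (d + d * (k - 1) div 2)))"
proof -
  define m where "m = d * (k - 1) div 2"
  have "\<forall>x\<in>S. \<exists>j q. j \<in> scd_index k d \<and> sum_list j \<le> q \<and> q + sum_list j \<le> d * (k - 1) \<and>
      x = scd_chain k j q"
    using scd_chain_surj assms(1) by blast
  then obtain J Q where J: "\<And>x. x \<in> S \<Longrightarrow> J x \<in> scd_index k d"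
    and Q: "\<And>x. x \<in> S \<Longrightarrow> sum_list (J x) \<le> Q x" "\<And>x. x \<in> S \<Longrightarrow> Q x + sum_list (J x) \<le> d * (k - 1)"
    and JQ: "\<And>x. x \<in> S \<Longrightarrow> x = scd_chain k (J x) (Q x)"
    by metis
  have m: "sum_list (J x) \<le> m" "m + sum_list (J x) \<le> d * (k - 1)" if "x \<in> S" for x
    using scd_index_sum_list[OF J[OF that]] by (auto simp: m_def)
  \<comment> \<open>Each point of the antichain is sent to the middle point of its chain.\<close>
  define f where "f x = scd_chain k (J x) m" for x
  have "inj_on f S"
  proof (rule inj_onI)
    fix x y assume xy: "x \<in> S" "y \<in> S" "f x = f y"
    then have same: "J x = J y"
      using scd_chain_inj[OF J[OF xy(1)] m[OF xy(1)] J[OF xy(2)] m[OF xy(2)]] by (simp add: f_def)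
    have "grid_le x y \<or> grid_le y x"
      using scd_chain_comparable[OF J[OF xy(1)] Q(1,2)[OF xy(1)], of "Q y"] Q(1,2)[OF xy(2)]
        JQ[OF xy(1)] JQ[OF xy(2)]
      unfolding same by simp
    with assms(2) xy(1,2) show "x = y"
      unfolding antichain_in_def by metis
  qed
  moreover have "f ` S \<subseteq> grid_level k d (int (d + m))"
  proof
    fix z assume "z \<in> f ` S"
    then obtain x where "x \<in> S" "z = f x"
      by blast
    then show "z \<in> grid_level k d (int (d + m))"
      using scd_chain_in_grid[OF J m] by (simp add: f_def grid_level_def)
  qed
  ultimately show ?thesis
    unfolding m_def by (metis card_inj_on_le finite_grid_level)
qed

lemma width_grid_le_middle_level: "width_grid k d \<le> card (grid_level k d (int (d + d * (k - 1) div 2)))"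
  unfolding width_grid_def
proof (rule cSup_least)
  show "card ` {S. S \<subseteq> grid k d \<and> antichain_in grid_le S} \<noteq> {}"
    by (auto simp: antichain_in_def)
next
  fix n assume "n \<in> card ` {S. S \<subseteq> grid k d \<and> antichain_in grid_le S}"
  then show "n \<le> card (grid_level k d (int (d + d * (k - 1) div 2)))"
    using card_antichain_le_middle_level by blast
qed

section \<open>Level sizes of the grid\<close>

lemma card_grid_level_Suc:
  "card (grid_level k (Suc d) z) = (\<Sum>y=1..k. card (grid_level k d (z - int y)))"
proof -
  have "grid_level k (Suc d) z = (\<Union>y\<in>{1..k}. (#) y ` grid_level k d (z - int y))"
  proof (rule set_eqI)
    fix x
    show "x \<in> grid_level k (Suc d) z \<longleftrightarrow> x \<in> (\<Union>y\<in>{1..k}. (#) y ` grid_level k d (z - int y))"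
    proof (cases x)
      case (Cons a l)
      have "x \<in> grid_level k (Suc d) z \<longleftrightarrow> a \<in> {1..k} \<and> l \<in> grid_level k d (z - int a)"
        by (auto simp: Cons grid_level_def Cons_in_grid_iff)
      then show ?thesis
        by (auto simp: Cons)
    qed (auto simp: grid_level_def grid_def)
  qed
  then have "card (grid_level k (Suc d) z) = (\<Sum>y\<in>{1..k}. card ((#) y ` grid_level k d (z - int y)))"
    by (simp only:) (rule card_UN_disjoint; auto simp: finite_grid_level)
  then show ?thesis
    by (simp add: card_image)
qed

lemma card_grid_level_Suc_le: "card (grid_level k (Suc d) z) \<le> k ^ d"
proof -
  have "inj_on tl (grid_level k (Suc d) z)"
  proof (rule inj_onI)
    fix x y assume xy: "x \<in> grid_level k (Suc d) z" "y \<in> grid_level k (Suc d) z" "tl x = tl y"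
    then obtain u x' v y' where "x = u # x'" "y = v # y'"
      by (auto simp: grid_level_def grid_def length_Suc_conv)
    with xy show "x = y"
      by (auto simp: grid_level_def)
  qed
  moreover have "tl ` grid_level k (Suc d) z \<subseteq> grid k d"
    by (auto simp: grid_level_def grid_def length_Suc_conv)
  ultimately show ?thesis
    by (metis card_inj_on_le finite_grid card_grid)
qed

lemma card_grid_level_Suc_diff:
  "int (card (grid_level k (Suc d) (z + 1))) - int (card (grid_level k (Suc d) z))
     = int (card (grid_level k d z)) - int (card (grid_level k d (z - int k)))"
proof -
  define g where "g y = int (card (grid_level k d (z - int y)))" for y
  have shift: "{1..k} = Suc ` {..<k}"
    by (simp add: atLeast1_atMost_eq_remove0 lessThan_atLeast0 image_Suc_atLeastLessThan
        atLeastLessThanSuc_atLeastAtMost)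
  have "int (card (grid_level k (Suc d) (z + 1))) = (\<Sum>y\<in>{1..k}. g (y - 1))"
    unfolding card_grid_level_Suc g_def by (simp add: of_nat_sum algebra_simps)
  also have "\<dots> = (\<Sum>y<k. g y)"
    unfolding shift by (simp add: sum.reindex)
  finally have "int (card (grid_level k (Suc d) (z + 1))) = (\<Sum>y<k. g y)" .
  moreover have "int (card (grid_level k (Suc d) z)) = (\<Sum>y<k. g (Suc y))"
    unfolding card_grid_level_Suc g_def shift by (simp add: of_nat_sum sum.reindex)
  moreover have "(\<Sum>y<k. g y) - (\<Sum>y<k. g (Suc y)) = g 0 - g k"
    by (simp add: sum_subtractf[symmetric] sum_lessThan_telescope')
  ultimately show ?thesis
    by (simp add: g_def)
qed

lemma card_grid_level_step:
  "\<bar>int (card (grid_level k (Suc (Suc d)) (z + 1))) - int (card (grid_level k (Suc (Suc d)) z))\<bar>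
     \<le> int (k ^ d)"
  using card_grid_level_Suc_le[of k d z] card_grid_level_Suc_le[of k d "z - int k"]
  unfolding card_grid_level_Suc_diff by linarith

lemma abs_diff_le_of_unit_steps:
  fixes f :: "int \<Rightarrow> 'a::linordered_idom"
  assumes step: "\<And>z. \<bar>f (z + 1) - f z\<bar> \<le> C"
  shows "\<bar>f z' - f z\<bar> \<le> of_int \<bar>z' - z\<bar> * C"
proof -
  have up: "\<bar>f (z + int t) - f z\<bar> \<le> of_nat t * C" for z t
  proof (induction t)
    case (Suc t)
    have shift: "z + int (Suc t) = z + int t + 1"
      by simp
    have "\<bar>f (z + int (Suc t)) - f z\<bar> = \<bar>(f (z + int t + 1) - f (z + int t)) + (f (z + int t) - f z)\<bar>"
      unfolding shift by simp
    also have "\<dots> \<le> \<bar>f (z + int t + 1) - f (z + int t)\<bar> + \<bar>f (z + int t) - f z\<bar>"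
      by (rule abs_triangle_ineq)
    also have "\<dots> \<le> C + of_nat t * C"
      using step Suc.IH by (rule add_mono)
    finally show ?case
      by (simp add: algebra_simps)
  qed simp
  show ?thesis
  proof (cases "z \<le> z'")
    case True
    then show ?thesis
      using up[of z "nat (z' - z)"] by simp
  next
    case False
    then show ?thesis
      using up[of z' "nat (z - z')"] by (simp add: abs_minus_commute)
  qed
qed

lemma width_grid_lower_bound:
  assumes "k \<ge> 1"
  shows "k ^ d \<le> (d * (k - 1) + 1) * width_grid k d"
proof -
  have "grid k d \<subseteq> (\<Union>r\<in>{d..d * k}. grid_level k d (int r))"
    using sum_list_grid_bounds by (fastforce simp: grid_level_def)
  then have "card (grid k d) \<le> card (\<Union>r\<in>{d..d * k}. grid_level k d (int r))"
    by (intro card_mono) (auto intro: finite_grid_level)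
  also have "\<dots> \<le> (\<Sum>r\<in>{d..d * k}. card (grid_level k d (int r)))"
    by (rule card_UN_le) simp
  also have "\<dots> \<le> (\<Sum>r\<in>{d..d * k}. width_grid k d)"
    by (intro sum_mono card_grid_level_le_width_grid)
  also have "\<dots> = (d * (k - 1) + 1) * width_grid k d"
    using assms by (cases k) auto
  finally show ?thesis
    by (simp add: card_grid)
qed

lemma width_grid_pos:
  assumes "k \<ge> 1"
  shows "0 < width_grid k d"
proof (rule ccontr)
  assume "\<not> 0 < width_grid k d"
  then have "k ^ d \<le> 0"
    using width_grid_lower_bound[OF assms, of d] by simp
  then show False
    using assms by simp
qed

lemma card_grid_level_lipschitz:
  "\<bar>real (card (grid_level k (Suc (Suc d)) z')) - real (card (grid_level k (Suc (Suc d)) z))\<bar>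
    \<le> real_of_int \<bar>z' - z\<bar> * real (k ^ d)"
proof (rule abs_diff_le_of_unit_steps)
  fix z
  have "real_of_int \<bar>int (card (grid_level k (Suc (Suc d)) (z + 1))) - int (card (grid_level k (Suc (Suc d)) z))\<bar>
      \<le> real_of_int (int (k ^ d))"
    using card_grid_level_step[of k d z] by (simp only: of_int_le_iff)
  then show "\<bar>real (card (grid_level k (Suc (Suc d)) (z + 1))) - real (card (grid_level k (Suc (Suc d)) z))\<bar>
      \<le> real (k ^ d)"
    by simp
qed

lemma power_le_width_grid:
  assumes "k \<ge> 1"
  shows "k * k ^ d \<le> Suc (Suc d) * width_grid k (Suc (Suc d))"
proof -
  have "k * (k * k ^ d) \<le> (Suc (Suc d) * (k - 1) + 1) * width_grid k (Suc (Suc d))"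
    using width_grid_lower_bound[OF assms, of "Suc (Suc d)"] by simp
  also have "\<dots> \<le> k * (Suc (Suc d) * width_grid k (Suc (Suc d)))"
    using assms by (cases k) (auto simp: algebra_simps)
  finally show ?thesis
    using assms by simp
qed

lemma card_grid_level_one: "1 \<le> r \<Longrightarrow> r \<le> k \<Longrightarrow> card (grid_level k 1 (int r)) = 1"
proof -
  assume "1 \<le> r" "r \<le> k"
  then have "grid_level k 1 (int r) = {[r]}"
    by (auto simp: grid_level_def grid_def length_Suc_conv)
  then show ?thesis
    by simp
qed

lemma card_grid_level_near_middle:
  assumes "k \<ge> 1" "d \<ge> 1" "d \<le> r" "r \<le> d * k"
  shows "real (width_grid k d) * (1 - real d * \<bar>real r - real (d + d * (k - 1) div 2)\<bar> / real k)
    \<le> real (card (grid_level k d (int r)))"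
proof -
  define W where "W = real (width_grid k d)"
  define mid where "mid = d + d * (k - 1) div 2"
  define N where "N z = real (card (grid_level k d z))" for z
  define a where "a = \<bar>real r - real mid\<bar>"
  have W_le_mid: "W \<le> N (int mid)"
    using width_grid_le_middle_level unfolding W_def N_def mid_def by simp
  show ?thesis
    unfolding W_def[symmetric] N_def[symmetric] mid_def[symmetric] a_def[symmetric]
  proof (cases "d = 1")
    case True
    have "N (int mid) = N (int r)"
      using assms True card_grid_level_one[of mid k] card_grid_level_one[of r k] by (simp add: N_def mid_def)
    moreover have "W * (1 - real d * a / real k) \<le> W"
      by (rule mult_left_le) (simp_all add: W_def a_def)
    ultimately show "W * (1 - real d * a / real k) \<le> N (int r)"
      using W_le_mid by simp
  next
    case False
    then obtain e where e: "d = Suc (Suc e)"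
      using assms(2) by (cases d; cases "d - 1") auto
    have "N (int mid) - a * real (k ^ e) \<le> N (int r)"
      using card_grid_level_lipschitz[of k e "int r" "int mid"] abs_le_D2
      unfolding N_def a_def e by fastforce
    moreover have "real k * real (k ^ e) \<le> real d * W"
      using power_le_width_grid[OF assms(1), of e] unfolding W_def e by (metis of_nat_le_iff of_nat_mult)
    then have "real (k ^ e) \<le> real d * W / real k"
      using assms(1) by (simp add: field_simps)
    then have "W - a * (real d * W / real k) \<le> N (int mid) - a * real (k ^ e)"
      using W_le_mid mult_left_mono[of "real (k ^ e)" "real d * W / real k" a] by (simp add: a_def)
    ultimately show "W * (1 - real d * a / real k) \<le> N (int r)"
      by (simp add: algebra_simps)
  qed
qed

section \<open>Embedding the grid into the Boolean lattice\<close>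

lemma Un_subset_Un_iff_separated:
  assumes "A \<union> A' \<subseteq> L" "B \<union> B' \<subseteq> R" "L \<inter> R = {}"
  shows "A \<union> B \<subseteq> A' \<union> B' \<longleftrightarrow> A \<subseteq> A' \<and> B \<subseteq> B'"
  using assms by blast

text \<open>
  \<open>grid_embed a k\<close> is an order embedding of \<open>[k]^d\<close> into the subsets of \<open>{..<a + d*(k-1)}\<close>:
  after the fixed prefix \<open>{..<a}\<close>, the \<open>i\<close>-th coordinate \<open>x\<^sub>i\<close> selects the first \<open>x\<^sub>i - 1\<close> elements of
  the \<open>i\<close>-th block of \<open>k - 1\<close> consecutive numbers.
\<close>
fun grid_blocks :: "nat \<Rightarrow> nat \<Rightarrow> nat list \<Rightarrow> nat set" where
  "grid_blocks k b [] = {}"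
| "grid_blocks k b (y # x) = {b..<b + (y - 1)} \<union> grid_blocks k (b + (k - 1)) x"

definition grid_embed :: "nat \<Rightarrow> nat \<Rightarrow> nat list \<Rightarrow> nat set" where
  "grid_embed a k x = {..<a} \<union> grid_blocks k a x"

lemma finite_grid_blocks: "finite (grid_blocks k b x)"
  by (induction x arbitrary: b) auto

lemma grid_blocks_subset: "set x \<subseteq> {1..k} \<Longrightarrow> grid_blocks k b x \<subseteq> {b..<b + length x * (k - 1)}"
proof (induction x arbitrary: b)
  case (Cons y x)
  have "grid_blocks k (b + (k - 1)) x \<subseteq> {b + (k - 1)..<b + (k - 1) + length x * (k - 1)}"
    by (rule Cons.IH) (use Cons.prems in simp)
  moreover have "y - 1 \<le> k - 1"
    using Cons.prems by auto
  ultimately show ?case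
    by auto
qed simp

lemma card_grid_blocks: "set x \<subseteq> {1..k} \<Longrightarrow> card (grid_blocks k b x) = sum_list x - length x"
proof (induction x arbitrary: b)
  case (Cons y x)
  have y: "1 \<le> y" "y \<le> k"
    using Cons.prems by auto
  have "grid_blocks k (b + (k - 1)) x \<subseteq> {b + (k - 1)..}"
    using grid_blocks_subset[of x k "b + (k - 1)"] Cons.prems by auto
  then have "{b..<b + (y - 1)} \<inter> grid_blocks k (b + (k - 1)) x = {}"
    using y by fastforce
  then have "card (grid_blocks k b (y # x)) = (y - 1) + (sum_list x - length x)"
    using Cons by (simp add: card_Un_disjoint finite_grid_blocks)
  moreover have "length x \<le> sum_list x"
    using Cons.prems by (induction x) auto
  ultimately show ?case
    using y by simp
qed simp

lemma grid_blocks_subset_iff: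
  assumes "set x \<subseteq> {1..k}" "set y \<subseteq> {1..k}" "length x = length y"
  shows "grid_blocks k b x \<subseteq> grid_blocks k b y \<longleftrightarrow> grid_le x y"
  using assms(3,1,2)
proof (induction x y arbitrary: b rule: list_induct2)
  case Nil
  then show ?case by (simp add: grid_le_def)
next
  case (Cons u x v y)
  have uv: "1 \<le> u" "u \<le> k" "1 \<le> v" "v \<le> k"
    using Cons.prems by auto
  have first: "{b..<b + (u - 1)} \<union> {b..<b + (v - 1)} \<subseteq> {..<b + (k - 1)}"
    using uv by auto
  have rest: "grid_blocks k (b + (k - 1)) x \<union> grid_blocks k (b + (k - 1)) y \<subseteq> {b + (k - 1)..}"
    using grid_blocks_subset[of x k] grid_blocks_subset[of y k] Cons.prems by fastforce
  have "grid_blocks k b (u # x) \<subseteq> grid_blocks k b (v # y) \<longleftrightarrow>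
      {b..<b + (u - 1)} \<subseteq> {b..<b + (v - 1)} \<and> grid_blocks k (b + (k - 1)) x \<subseteq> grid_blocks k (b + (k - 1)) y"
    unfolding grid_blocks.simps by (rule Un_subset_Un_iff_separated[OF first rest]) auto
  also have "\<dots> \<longleftrightarrow> u \<le> v \<and> grid_le x y"
    using Cons uv by (auto simp: ivl_subset)
  finally show ?case
    by (simp add: grid_le_Cons_iff)
qed

lemma grid_embed_subset: "x \<in> grid k d \<Longrightarrow> grid_embed a k x \<subseteq> {..<a + d * (k - 1)}"
  using grid_blocks_subset[of x k a] by (auto simp: grid_embed_def grid_def)

lemma card_grid_embed:
  assumes "x \<in> grid k d"
  shows "card (grid_embed a k x) = a + sum_list x - d"
proof -
  have x: "set x \<subseteq> {1..k}" "length x = d"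
    using assms by (auto simp: grid_def)
  then have "{..<a} \<inter> grid_blocks k a x = {}"
    using grid_blocks_subset[of x k a] by auto
  then show ?thesis
    using x card_grid_blocks[OF x(1)] sum_list_grid_bounds[OF assms]
    by (simp add: grid_embed_def card_Un_disjoint finite_grid_blocks)
qed

lemma grid_embed_subset_iff:
  assumes "x \<in> grid k d" "y \<in> grid k d"
  shows "grid_embed a k x \<subseteq> grid_embed a k y \<longleftrightarrow> grid_le x y"
proof -
  have xy: "set x \<subseteq> {1..k}" "set y \<subseteq> {1..k}" "length x = length y"
    using assms by (auto simp: grid_def)
  then have blocks: "grid_blocks k a x \<union> grid_blocks k a y \<subseteq> {a..}"
    using grid_blocks_subset[of x k a] grid_blocks_subset[of y k a] by auto
  have prefix: "{..<a} \<union> {..<a} \<subseteq> {..<a}" "{..<a} \<inter> {a..} = {}"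
    by auto
  have "grid_embed a k x \<subseteq> grid_embed a k y \<longleftrightarrow>
      {..<a} \<subseteq> {..<a} \<and> grid_blocks k a x \<subseteq> grid_blocks k a y"
    unfolding grid_embed_def by (rule Un_subset_Un_iff_separated[OF prefix(1) blocks prefix(2)])
  also have "\<dots> \<longleftrightarrow> grid_le x y"
    using grid_blocks_subset_iff[OF xy] by simp
  finally show ?thesis .
qed

lemma inj_on_grid_embed: "inj_on (grid_embed a k) (grid k d)"
proof (rule inj_onI)
  fix x y assume xy: "x \<in> grid k d" "y \<in> grid k d" "grid_embed a k x = grid_embed a k y"
  then have "grid_le x y" "grid_le y x"
    using grid_embed_subset_iff by blast+
  then show "x = y"
    using grid_le_sum_list_eq_imp_eq grid_le_imp_sum_list_le by (meson antisym)
qed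

lemma grid_embed_level:
  assumes "a \<le> s"
  shows "{x \<in> grid k d. card (grid_embed a k x) = s} = grid_level k d (int s - int a + int d)"
proof -
  have "card (grid_embed a k x) = s \<longleftrightarrow> int (sum_list x) = int s - int a + int d" if "x \<in> grid k d" for x
    using card_grid_embed[OF that, of a] sum_list_grid_bounds[OF that] assms by auto
  then show ?thesis
    unfolding grid_level_def by auto
qed

section \<open>Lubell's permutation method\<close>

lemma exists_permutes_image_eq:
  assumes "finite A" "U \<subseteq> A" "V \<subseteq> A" "card U = card V"
  obtains p where "p permutes A" "p ` U = V"
proof -
  have fin: "finite U" "finite V" "finite (A - U)"
    using assms finite_subset by auto
  obtain g where g: "bij_betw g U V"
    using finite_same_card_bij[OF fin(1,2) assms(4)] by blast
  have "card (A - U) = card (A - V)"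
    using assms fin by (simp add: card_Diff_subset)
  then obtain h where h: "bij_betw h (A - U) (A - V)"
    using finite_same_card_bij[of "A - U" "A - V"] assms(1) by auto
  define p where "p x = (if x \<in> U then g x else if x \<in> A then h x else x)" for x
  have "bij_betw p U V"
    using g by (rule bij_betw_cong[THEN iffD1, rotated]) (simp add: p_def)
  moreover have "bij_betw p (A - U) (A - V)"
    using h by (rule bij_betw_cong[THEN iffD1, rotated]) (simp add: p_def)
  ultimately have "bij_betw p (U \<union> (A - U)) (V \<union> (A - V))"
    by (rule bij_betw_combine) auto
  then have "bij_betw p A A"
    using assms(2,3) by (simp add: Un_absorb1)
  then have "p permutes A"
    by (rule bij_imp_permutes) (use assms(2) in \<open>auto simp: p_def\<close>)
  moreover have "p ` U = V"
    using \<open>bij_betw p U V\<close> by (simp add: bij_betw_def)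
  ultimately show ?thesis
    by (rule that)
qed

lemma card_permutes_image_eq_le:
  assumes "finite A" "U \<subseteq> A" "V \<subseteq> A" "V' \<subseteq> A" "card V = card V'"
  shows "card {p. p permutes A \<and> p ` U = V} \<le> card {p. p permutes A \<and> p ` U = V'}"
proof -
  obtain q where q: "q permutes A" "q ` V = V'"
    using exists_permutes_image_eq[OF assms(1,3,4,5)] by blast
  have "inj_on ((\<circ>) q) {p. p permutes A \<and> p ` U = V}"
  proof (rule inj_onI)
    fix p p' assume "q \<circ> p = q \<circ> p'"
    then show "p = p'"
      using permutes_inj[OF q(1)] by (metis fun.inj_map inj_eq)
  qed
  moreover have "(\<circ>) q ` {p. p permutes A \<and> p ` U = V} \<subseteq> {p. p permutes A \<and> p ` U = V'}"
    using q permutes_compose by (auto simp: image_comp[symmetric])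
  moreover have "finite {p. p permutes A \<and> p ` U = V'}"
    using finite_permutations[OF assms(1)] by (rule finite_subset[rotated]) auto
  ultimately show ?thesis
    by (rule card_inj_on_le)
qed

lemma card_permutes_image_eq_cong:
  assumes "finite A" "U \<subseteq> A" "V \<subseteq> A" "V' \<subseteq> A" "card V = card V'"
  shows "card {p. p permutes A \<and> p ` U = V} = card {p. p permutes A \<and> p ` U = V'}"
  using card_permutes_image_eq_le[OF assms] card_permutes_image_eq_le[OF assms(1,2,4,3) assms(5)[symmetric]]
  by simp

lemma permutes_UN_image:
  assumes "U \<subseteq> A"
  shows "{p. p permutes A} = (\<Union>T \<in> {T. T \<subseteq> A \<and> card T = card U}. {p. p permutes A \<and> p ` U = T})"
proof -
  have "p ` U \<subseteq> A" "card (p ` U) = card U" if "p permutes A" for p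
    using permutes_image[OF that] permutes_inj[OF that] assms by (auto simp: card_image inj_on_subset)
  then show ?thesis
    by blast
qed

text \<open>
  All images \<open>p ` U\<close> of the same size are hit equally often, so each is hit
  \<open>card A! / (card A choose card U)\<close> times.
\<close>
lemma card_permutes_image_eq:
  assumes "finite A" "U \<subseteq> A" "V \<subseteq> A"
  shows "card {p. p permutes A \<and> p ` U = V} =
    (if card V = card U then fact (card U) * fact (card A - card U) else 0)"
proof (cases "card V = card U")
  case False
  have "card (p ` U) = card U" if "p permutes A" for p
    using permutes_inj[OF that] by (simp add: card_image inj_on_subset)
  with False have "{p. p permutes A \<and> p ` U = V} = {}"
    by auto
  then show ?thesis
    by (simp only: False card.empty if_False)
next
  case True
  define Ts where "Ts = {T. T \<subseteq> A \<and> card T = card U}"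
  define c where "c = card {p. p permutes A \<and> p ` U = V}"
  have fiber: "card {p. p permutes A \<and> p ` U = T} = c" if "T \<in> Ts" for T
    using card_permutes_image_eq_cong[OF assms(1,2) _ assms(3)] that True by (simp add: Ts_def c_def)
  have "fact (card A) = card (\<Union>T\<in>Ts. {p. p permutes A \<and> p ` U = T})"
    using card_permutations[OF refl assms(1)] permutes_UN_image[OF assms(2)] by (simp add: Ts_def)
  also have "\<dots> = (\<Sum>T\<in>Ts. card {p. p permutes A \<and> p ` U = T})"
    using finite_permutations[OF assms(1)] assms(1)
    by (intro card_UN_disjoint) (auto simp: Ts_def intro: finite_subset[rotated])
  also have "\<dots> = (card A choose card U) * c"
    using fiber n_subsets[OF assms(1), of "card U"] by (simp add: Ts_def)
  finally have "fact (card A) = (card A choose card U) * c" .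
  moreover have "fact (card A) = (card A choose card U) * (fact (card U) * fact (card A - card U))"
    using binomial_fact_lemma[OF card_mono[OF assms(1,2)]] by (simp add: algebra_simps)
  moreover have "0 < card A choose card U"
    using card_mono[OF assms(1,2)] by simp
  ultimately show ?thesis
    using True by (simp add: c_def)
qed

lemma card_permutes_image_in:
  assumes "finite A" "U \<subseteq> A" "F \<subseteq> Pow A"
  shows "card {p. p permutes A \<and> p ` U \<in> F} =
    (\<Sum>S\<in>F. if card U = card S then fact (card S) * fact (card A - card S) else 0)"
proof -
  have "finite F"
    using assms(1,3) finite_subset by (metis finite_Pow_iff)
  have "{p. p permutes A \<and> p ` U \<in> F} = (\<Union>S\<in>F. {p. p permutes A \<and> p ` U = S})"
    by auto
  then have "card {p. p permutes A \<and> p ` U \<in> F} = (\<Sum>S\<in>F. card {p. p permutes A \<and> p ` U = S})"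
    using \<open>finite F\<close> finite_permutations[OF assms(1)]
    by (simp, subst card_UN_disjoint) (auto intro: finite_subset[rotated])
  also have "\<dots> = (\<Sum>S\<in>F. if card U = card S then fact (card S) * fact (card A - card S) else 0)"
    using card_permutes_image_eq[OF assms(1,2)] assms(3) by (intro sum.cong) auto
  finally show ?thesis .
qed

lemma card_filter_eq_sum: "finite A \<Longrightarrow> card {x \<in> A. P x} = (\<Sum>x\<in>A. if P x then 1 else 0)"
  by (simp add: sum.If_cases Int_def)

text \<open>
  Lubell's double counting: count the pairs \<open>(p, x)\<close> of a permutation \<open>p\<close> of \<open>A\<close> and an
  \<open>x \<in> G\<close> with \<open>p ` \<Phi> x \<in> F\<close>, once for each \<open>p\<close> and once for each \<open>x\<close>.
\<close>
lemma lubell_double_counting: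
  fixes \<Phi> :: "'g \<Rightarrow> 'a set"
  assumes "finite G" "finite A" "\<And>x. x \<in> G \<Longrightarrow> \<Phi> x \<subseteq> A" "F \<subseteq> Pow A"
    and bound: "\<And>p. p permutes A \<Longrightarrow> card {x \<in> G. p ` \<Phi> x \<in> F} \<le> L"
  shows "(\<Sum>S\<in>F. card {x \<in> G. card (\<Phi> x) = card S} * (fact (card S) * fact (card A - card S)))
    \<le> fact (card A) * L"
proof -
  define Perms where "Perms = {p. p permutes A}"
  have "(\<Sum>S\<in>F. card {x \<in> G. card (\<Phi> x) = card S} * (fact (card S) * fact (card A - card S)))
      = (\<Sum>S\<in>F. \<Sum>x\<in>G. if card (\<Phi> x) = card S then fact (card S) * fact (card A - card S) else 0)"
    using assms(1) by (simp add: sum.If_cases Int_def)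
  also have "\<dots> = (\<Sum>x\<in>G. card {p \<in> Perms. p ` \<Phi> x \<in> F})"
    using card_permutes_image_in[OF assms(2) assms(3) assms(4)]
    by (simp add: sum.swap[of _ F] Perms_def)
  also have "\<dots> = (\<Sum>x\<in>G. \<Sum>p\<in>Perms. if p ` \<Phi> x \<in> F then 1 else 0)"
    using finite_permutations[OF assms(2)] by (simp add: card_filter_eq_sum[of Perms] Perms_def[symmetric])
  also have "\<dots> = (\<Sum>p\<in>Perms. \<Sum>x\<in>G. if p ` \<Phi> x \<in> F then 1 else 0)"
    by (rule sum.swap)
  also have "\<dots> = (\<Sum>p\<in>Perms. card {x \<in> G. p ` \<Phi> x \<in> F})"
    using assms(1) by (simp add: card_filter_eq_sum)
  also have "\<dots> \<le> (\<Sum>p\<in>Perms. L)"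
    using bound by (intro sum_mono) (simp add: Perms_def)
  also have "\<dots> = fact (card A) * L"
    using card_permutations[OF refl assms(2)] by (simp add: Perms_def)
  finally show ?thesis .
qed

lemma weak_subposet_trans:
  assumes "weak_subposet A leA B leB" "weak_subposet B leB C leC"
  shows "weak_subposet A leA C leC"
proof -
  obtain i where i: "inj_on i A" "i ` A \<subseteq> B" "\<forall>p\<in>A. \<forall>p'\<in>A. leA p p' \<longrightarrow> leB (i p) (i p')"
    using assms(1) unfolding weak_subposet_def by blast
  obtain j where j: "inj_on j B" "j ` B \<subseteq> C" "\<forall>p\<in>B. \<forall>p'\<in>B. leB p p' \<longrightarrow> leC (j p) (j p')"
    using assms(2) unfolding weak_subposet_def by blast
  have "inj_on (j \<circ> i) A"
    using i(1,2) j(1) by (blast intro: comp_inj_on inj_on_subset)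
  moreover have "(j \<circ> i) ` A \<subseteq> C"
    using i(2) j(2) by (auto simp: image_subset_iff)
  moreover have "\<forall>p\<in>A. \<forall>p'\<in>A. leA p p' \<longrightarrow> leC ((j \<circ> i) p) ((j \<circ> i) p')"
    using i j by (simp add: image_subset_iff)
  ultimately show ?thesis
    unfolding weak_subposet_def by (intro exI[of _ "j \<circ> i"] conjI) assumption+
qed

lemma strong_subposet_trans:
  assumes "strong_subposet A leA B leB" "strong_subposet B leB C leC"
  shows "strong_subposet A leA C leC"
proof -
  obtain i where i: "inj_on i A" "i ` A \<subseteq> B" "\<forall>p\<in>A. \<forall>p'\<in>A. leA p p' \<longleftrightarrow> leB (i p) (i p')"
    using assms(1) unfolding strong_subposet_def by blast
  obtain j where j: "inj_on j B" "j ` B \<subseteq> C" "\<forall>p\<in>B. \<forall>p'\<in>B. leB p p' \<longleftrightarrow> leC (j p) (j p')"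
    using assms(2) unfolding strong_subposet_def by blast
  have "inj_on (j \<circ> i) A"
    using i(1,2) j(1) by (blast intro: comp_inj_on inj_on_subset)
  moreover have "(j \<circ> i) ` A \<subseteq> C"
    using i(2) j(2) by (auto simp: image_subset_iff)
  moreover have "\<forall>p\<in>A. \<forall>p'\<in>A. leA p p' \<longleftrightarrow> leC ((j \<circ> i) p) ((j \<circ> i) p')"
    using i j by (simp add: image_subset_iff)
  ultimately show ?thesis
    unfolding strong_subposet_def by (intro exI[of _ "j \<circ> i"] conjI) assumption+
qed

lemma strong_imp_weak_subposet:
  assumes "strong_subposet A leA B leB"
  shows "weak_subposet A leA B leB"
proof -
  obtain i where i: "inj_on i A" "i ` A \<subseteq> B" "\<forall>p\<in>A. \<forall>p'\<in>A. leA p p' \<longleftrightarrow> leB (i p) (i p')"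
    using assms unfolding strong_subposet_def by blast
  then show ?thesis
    unfolding weak_subposet_def by (intro exI[of _ i]) simp
qed

lemma strong_subposet_preimage:
  assumes "inj_on f X" "\<And>x y. x \<in> X \<Longrightarrow> y \<in> X \<Longrightarrow> leQ (f x) (f y) \<longleftrightarrow> leX x y"
  shows "strong_subposet {x \<in> X. f x \<in> F} leX F leQ"
  unfolding strong_subposet_def
proof (intro exI[of _ f] conjI)
  show "inj_on f {x \<in> X. f x \<in> F}"
    using assms(1) by (rule inj_on_subset) blast
  show "\<forall>x\<in>{x \<in> X. f x \<in> F}. \<forall>y\<in>{x \<in> X. f x \<in> F}. leX x y \<longleftrightarrow> leQ (f x) (f y)"
    using assms(2) by simp
qed blast

lemma strong_subposet_grid_preimage:
  assumes "inj p"
  shows "strong_subposet {x \<in> grid k d. p ` grid_embed a k x \<in> F} grid_le F (\<subseteq>)"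
proof (rule strong_subposet_preimage)
  show "inj_on (\<lambda>x. p ` grid_embed a k x) (grid k d)"
    using inj_on_grid_embed assms by (simp add: inj_on_def inj_image_eq_iff)
  show "p ` grid_embed a k x \<subseteq> p ` grid_embed a k y \<longleftrightarrow> grid_le x y"
    if "x \<in> grid k d" "y \<in> grid k d" for x y
    using grid_embed_subset_iff[OF that] assms by (simp add: inj_image_subset_iff)
qed

lemma card_le_Sup_card_free:
  assumes "finite Q" "F \<subseteq> Q" "\<not> E F"
  shows "card F \<le> Sup (card ` {F. F \<subseteq> Q \<and> \<not> E F})"
proof (rule cSup_upper)
  show "card F \<in> card ` {F. F \<subseteq> Q \<and> \<not> E F}"
    using assms by blast
  show "bdd_above (card ` {F. F \<subseteq> Q \<and> \<not> E F})"
    by (rule bdd_aboveI[where M = "card Q"]) (auto intro: card_mono assms(1))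
qed

lemma Sup_card_free_le:
  assumes "finite Q" "0 \<le> b" "\<And>F. F \<subseteq> Q \<Longrightarrow> \<not> E F \<Longrightarrow> real (card F) \<le> b"
  shows "real (Sup (card ` {F. F \<subseteq> Q \<and> \<not> E F})) \<le> b"
proof (cases "{F. F \<subseteq> Q \<and> \<not> E F} = {}")
  case True
  then show ?thesis
    using assms(2) by (simp add: Sup_nat_def)
next
  case False
  have "finite (card ` {F. F \<subseteq> Q \<and> \<not> E F})"
    using assms(1) by simp
  then have "Sup (card ` {F. F \<subseteq> Q \<and> \<not> E F}) \<in> card ` {F. F \<subseteq> Q \<and> \<not> E F}"
    using False by (simp add: cSup_eq_Max)
  then obtain F where "F \<subseteq> Q" "\<not> E F" "Sup (card ` {F. F \<subseteq> Q \<and> \<not> E F}) = card F"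
    by blast
  then show ?thesis
    using assms(3) by simp
qed

lemma card_grid_preimage_le_La_poset:
  assumes "inj p" "\<not> weak_subposet P leP F (\<subseteq>)"
  shows "card {x \<in> grid k d. p ` grid_embed a k x \<in> F} \<le> La_poset (grid k d) grid_le P leP"
proof -
  have "\<not> weak_subposet P leP {x \<in> grid k d. p ` grid_embed a k x \<in> F} grid_le"
    using weak_subposet_trans[OF _ strong_imp_weak_subposet[OF strong_subposet_grid_preimage[OF assms(1)]]]
      assms(2) by blast
  then show ?thesis
    unfolding La_poset_def by (intro card_le_Sup_card_free finite_grid) auto
qed

lemma card_grid_preimage_le_La_star_poset:
  assumes "inj p" "\<not> strong_subposet P leP F (\<subseteq>)"
  shows "card {x \<in> grid k d. p ` grid_embed a k x \<in> F} \<le> La_star_poset (grid k d) grid_le P leP"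
proof -
  have "\<not> strong_subposet P leP {x \<in> grid k d. p ` grid_embed a k x \<in> F} grid_le"
    using strong_subposet_trans[OF _ strong_subposet_grid_preimage[OF assms(1)]] assms(2) by blast
  then show ?thesis
    unfolding La_star_poset_def by (intro card_le_Sup_card_free finite_grid) auto
qed

section \<open>Binomial estimates\<close>

lemma binomial_tail_le:
  assumes "0 < n" "0 \<le> \<delta>"
  shows "(\<Sum>s | s \<le> n \<and> \<delta> \<le> \<bar>real s - real n / 2\<bar>. real (n choose s)) \<le> 2 ^ n * (2 * exp (-2 * \<delta>\<^sup>2 / n))"
proof -
  interpret binomial_distribution n "1/2"
    by unfold_locales simp
  define A where "A = {s. s \<le> n \<and> \<delta> \<le> \<bar>real s - real n / 2\<bar>}"
  have "measure_pmf.prob (binomial_pmf n (1/2)) {s. \<delta> \<le> \<bar>real s - real n * (1/2)\<bar>} \<le> 2 * exp (-2 * \<delta>\<^sup>2 / n)"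
    by (rule prob_abs_ge[OF assms])
  moreover have "A = {s. \<delta> \<le> \<bar>real s - real n * (1/2)\<bar>} \<inter> set_pmf (binomial_pmf n (1/2))"
    by (auto simp: A_def)
  then have "measure_pmf.prob (binomial_pmf n (1/2)) {s. \<delta> \<le> \<bar>real s - real n * (1/2)\<bar>}
      = measure_pmf.prob (binomial_pmf n (1/2)) A"
    by (simp only: measure_Int_set_pmf)
  moreover have "measure_pmf.prob (binomial_pmf n (1/2)) A = (\<Sum>s\<in>A. real (n choose s) / 2 ^ n)"
  proof -
    have "measure_pmf.prob (binomial_pmf n (1/2)) A = (\<Sum>s\<in>A. pmf (binomial_pmf n (1/2)) s)"
      by (rule measure_measure_pmf_finite) (simp add: A_def)
    also have "\<dots> = (\<Sum>s\<in>A. real (n choose s) / 2 ^ n)"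
    proof (rule sum.cong[OF refl])
      fix s assume "s \<in> A"
      then have "(1/2::real) ^ s * (1 - 1/2) ^ (n - s) = 1 / 2 ^ n"
        by (simp add: A_def power_add[symmetric] power_one_over)
      then show "pmf (binomial_pmf n (1/2)) s = real (n choose s) / 2 ^ n"
        by (simp add: pmf_binomial mult.assoc)
    qed
    finally show ?thesis .
  qed
  ultimately have "(\<Sum>s\<in>A. real (n choose s)) / 2 ^ n \<le> 2 * exp (-2 * \<delta>\<^sup>2 / n)"
    by (simp add: sum_divide_distrib)
  then show ?thesis
    by (simp add: A_def divide_le_eq mult.commute)
qed

lemma two_power_le_central_binomial: "2 ^ n \<le> (real n + 1) * real (n choose (n div 2))"
proof -
  have "(2::real) ^ n = (\<Sum>s\<le>n. real (n choose s))"
    using choose_row_sum[of n] by (metis of_nat_numeral of_nat_power of_nat_sum)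
  also have "\<dots> \<le> (\<Sum>s\<le>n. real (n choose (n div 2)))"
    by (intro sum_mono) (simp add: binomial_maximum)
  finally show ?thesis
    by (simp add: add.commute)
qed

lemma eventually_binomial_tail_le:
  fixes \<gamma> \<epsilon> C :: real
  assumes "0 < \<gamma>" "0 < \<epsilon>"
  shows "eventually (\<lambda>n. (\<Sum>s | s \<le> n \<and> \<gamma> * real n \<le> \<bar>real s - real n / 2\<bar> + C. real (n choose s))
    \<le> \<epsilon> * real (n choose (n div 2))) sequentially"
proof -
  have "(\<lambda>n::nat. (real n + 1) * (2 * exp (-2 * (\<gamma> * real n - C)\<^sup>2 / real n))) \<longlonglongrightarrow> 0"
    using assms(1) by real_asymp
  then have "eventually (\<lambda>n. (real n + 1) * (2 * exp (-2 * (\<gamma> * real n - C)\<^sup>2 / real n)) < \<epsilon>) sequentially"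
    using assms(2) by (rule order_tendstoD)
  moreover have "eventually (\<lambda>n::nat. 0 \<le> \<gamma> * real n - C) sequentially"
    using assms(1) by real_asymp
  moreover have "eventually (\<lambda>n::nat. 0 < n) sequentially"
    by (rule eventually_gt_at_top)
  ultimately show ?thesis
  proof eventually_elim
    case (elim n)
    have "(\<Sum>s | s \<le> n \<and> \<gamma> * real n \<le> \<bar>real s - real n / 2\<bar> + C. real (n choose s))
        = (\<Sum>s | s \<le> n \<and> \<gamma> * real n - C \<le> \<bar>real s - real n / 2\<bar>. real (n choose s))"
      by (simp add: algebra_simps)
    also have "\<dots> \<le> 2 ^ n * (2 * exp (-2 * (\<gamma> * real n - C)\<^sup>2 / n))"
      using elim by (intro binomial_tail_le) auto
    also have "\<dots> \<le> ((real n + 1) * real (n choose (n div 2))) * (2 * exp (-2 * (\<gamma> * real n - C)\<^sup>2 / n))"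
      by (intro mult_right_mono two_power_le_central_binomial) simp
    also have "\<dots> = ((real n + 1) * (2 * exp (-2 * (\<gamma> * real n - C)\<^sup>2 / n))) * real (n choose (n div 2))"
      by (simp only: ac_simps)
    also have "\<dots> \<le> \<epsilon> * real (n choose (n div 2))"
      using elim(1) by (intro mult_right_mono) simp_all
    finally show ?case .
  qed
qed

lemma card_subsets_with_card:
  assumes "finite A"
  shows "card {S. S \<subseteq> A \<and> P (card S)} = (\<Sum>s | s \<le> card A \<and> P s. card A choose s)"
proof -
  have "{S. S \<subseteq> A \<and> P (card S)} = (\<Union>s \<in> {s. s \<le> card A \<and> P s}. {S. S \<subseteq> A \<and> card S = s})"
    using assms card_mono by blast
  also have "card \<dots> = (\<Sum>s | s \<le> card A \<and> P s. card {S. S \<subseteq> A \<and> card S = s})"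
    by (rule card_UN_disjoint) (auto simp: assms)
  finally show ?thesis
    by (simp add: n_subsets assms)
qed

lemma fact_mult_fact_ge_central:
  assumes "s \<le> n"
  shows "fact (n div 2) * fact (n - n div 2) \<le> (fact s * fact (n - s) :: nat)"
proof -
  have "fact (n div 2) * fact (n - n div 2) * (n choose s) \<le> fact (n div 2) * fact (n - n div 2) * (n choose (n div 2))"
    by (simp add: binomial_maximum)
  also have "\<dots> = fact s * fact (n - s) * (n choose s)"
    using binomial_fact_lemma[of "n div 2" n] binomial_fact_lemma[OF assms] by simp
  finally show ?thesis
    using assms by simp
qed

section \<open>From the grid to the Boolean lattice\<close>

text \<open>
  With \<open>k = 2dT + 1\<close>, \<open>grid_embed (h - d\<^sup>2T) k\<close> sends the middle level of \<open>[k]^d\<close> to the sets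
  of size \<open>h\<close>.
\<close>
lemma card_grid_embed_level_near_middle:
  fixes \<epsilon> :: real
  assumes d: "1 \<le> d" and \<epsilon>: "\<epsilon> \<le> 1" and h: "d * d * T \<le> h" and k: "k = 2 * d * T + 1"
    and close: "2 * real d * \<bar>real s - real h\<bar> \<le> \<epsilon> * real k"
  shows "(1 - \<epsilon> / 2) * real (width_grid k d)
    \<le> real (card {x \<in> grid k d. card (grid_embed (h - d * d * T) k x) = s})"
proof -
  define X where "X = d * d * T"
  define a where "a = h - X"
  define W where "W = real (width_grid k d)"
  define N where "N = card {x \<in> grid k d. card (grid_embed a k x) = s}"
  have dk: "d * (k - 1) = 2 * X" "d * k = 2 * X + d"
    by (simp_all add: k X_def algebra_simps)
  have "0 < real k"
    unfolding of_nat_0_less_iff by (simp add: k)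
  have "2 * real d * \<bar>real s - real h\<bar> \<le> real k"
    using close mult_right_mono[OF \<epsilon>, of "real k"] by simp
  also have "\<dots> < 2 * real d * (real T + 1)"
    using d by (simp add: k algebra_simps)
  finally have "\<bar>real s - real h\<bar> < real T + 1"
    using d by (simp add: mult_less_cancel_left)
  moreover have "T \<le> X" "X \<le> h"
    using d h by (simp_all add: X_def)
  ultimately have s: "a \<le> s" "s \<le> h + X" "h \<le> s + X"
    by (auto simp: a_def)
  define r where "r = s - a + d"
  have "N = card (grid_level k d (int r))"
    using grid_embed_level[OF s(1), of k d] s(1) by (simp add: N_def r_def of_nat_diff algebra_simps)
  moreover have "d \<le> r" "r \<le> d * k"
    unfolding dk r_def a_def using s h X_def by linarith+
  moreover have "real r - real (d + d * (k - 1) div 2) = real s - real h"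
    unfolding dk r_def a_def using s h X_def by (simp add: of_nat_diff)
  ultimately have "W * (1 - real d * \<bar>real s - real h\<bar> / real k) \<le> real N"
    using card_grid_level_near_middle[OF _ d, of k r] by (simp add: W_def k)
  moreover have "real d * \<bar>real s - real h\<bar> / real k \<le> \<epsilon> / 2"
    using close \<open>0 < real k\<close> by (simp add: field_simps)
  then have "W * (1 - \<epsilon> / 2) \<le> W * (1 - real d * \<bar>real s - real h\<bar> / real k)"
    by (intro mult_left_mono) (simp_all add: W_def)
  ultimately show ?thesis
    by (simp add: N_def W_def a_def X_def mult.commute)
qed

lemma lubell_grid_embed:
  assumes F: "F \<subseteq> cube n" and n: "a + d * (k - 1) \<le> n"
    and pullback: "\<And>p. p permutes {..<n} \<Longrightarrow> card {x \<in> grid k d. p ` grid_embed a k x \<in> F} \<le> L"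
  shows "(\<Sum>S\<in>F. card {x \<in> grid k d. card (grid_embed a k x) = card S} * (fact (card S) * fact (n - card S)))
    \<le> fact n * L"
proof -
  have "(\<Sum>S\<in>F. card {x \<in> grid k d. card (grid_embed a k x) = card S}
      * (fact (card S) * fact (card {..<n} - card S))) \<le> fact (card {..<n}) * L"
  proof (rule lubell_double_counting)
    show "grid_embed a k x \<subseteq> {..<n}" if "x \<in> grid k d" for x
      using grid_embed_subset[OF that, of a] n by auto
  qed (use F pullback finite_grid in \<open>auto simp: cube_def atLeast0LessThan\<close>)
  then show ?thesis
    by simp
qed

lemma card_central_subfamily_le:
  fixes F :: "nat set set" and \<epsilon> :: real
  assumes d: "1 \<le> d" and \<epsilon>: "\<epsilon> \<le> 1"
    and n: "8 * (d * d * T) \<le> n" and k: "k = 2 * d * T + 1"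
    and F: "F \<subseteq> cube n"
    and pullback: "\<And>p. p permutes {..<n} \<Longrightarrow>
      card {x \<in> grid k d. p ` grid_embed (n div 2 - d * d * T) k x \<in> F} \<le> L"
  shows "real (card {S \<in> F. 2 * real d * \<bar>real (card S) - real (n div 2)\<bar> \<le> \<epsilon> * real k})
      * ((1 - \<epsilon> / 2) * real (width_grid k d)) \<le> real L * real (n choose (n div 2))"
proof -
  define h where "h = n div 2"
  define a where "a = h - d * d * T"
  define W where "W = real (width_grid k d)"
  define G where "G = {S \<in> F. 2 * real d * \<bar>real (card S) - real h\<bar> \<le> \<epsilon> * real k}"
  define N where "N S = card {x \<in> grid k d. card (grid_embed a k x) = card S}" for S :: "nat set"
  define w :: "nat \<Rightarrow> nat" where "w s = fact s * fact (n - s)" for s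
  have "4 * m \<le> n div 2" "2 * (n div 2) \<le> n" if "8 * m \<le> n" for m
    using that by presburger+
  then have h: "4 * (d * d * T) \<le> h" "2 * h \<le> n" "h \<le> n"
    using n by (simp_all add: h_def)
  then have "a + d * (k - 1) \<le> n"
    using n by (simp add: a_def k algebra_simps)
  then have lubell: "(\<Sum>S\<in>F. N S * w (card S)) \<le> fact n * L"
    using lubell_grid_embed[OF F _ pullback] by (simp add: N_def w_def a_def h_def)
  have central: "(1 - \<epsilon> / 2) * W * real (w h) \<le> real (N S * w (card S))" if "S \<in> G" for S
  proof -
    have "(1 - \<epsilon> / 2) * W \<le> real (N S)"
      using card_grid_embed_level_near_middle[OF d \<epsilon> _ k] h that
      by (simp add: G_def N_def W_def a_def)
    moreover have "card S \<le> n"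
      using F that card_mono[of "{..<n}" S] by (auto simp: G_def cube_def atLeast0LessThan)
    then have "w h \<le> w (card S)"
      using fact_mult_fact_ge_central by (simp add: w_def h_def)
    ultimately show ?thesis
      using \<epsilon> by (simp add: mult_mono)
  qed
  have "real (card G) * ((1 - \<epsilon> / 2) * W * real (w h)) = (\<Sum>S\<in>G. (1 - \<epsilon> / 2) * W * real (w h))"
    by simp
  also have "\<dots> \<le> (\<Sum>S\<in>G. real (N S * w (card S)))"
    by (rule sum_mono) (rule central)
  also have "\<dots> \<le> (\<Sum>S\<in>F. real (N S * w (card S)))"
    using F finite_subset[OF F] by (intro sum_mono2) (auto simp: G_def cube_def)
  also have "\<dots> \<le> real (fact n * L)"
    using lubell by (simp only: of_nat_sum[symmetric] of_nat_le_iff)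
  also have "\<dots> = real L * real (n choose h) * real (w h)"
    unfolding binomial_fact_lemma[OF h(3), symmetric] by (simp add: w_def)
  finally have "real (card G) * ((1 - \<epsilon> / 2) * W) * real (w h) \<le> real L * real (n choose h) * real (w h)"
    by (simp add: algebra_simps)
  moreover have "0 < real (w h)"
    by (simp add: w_def)
  ultimately show ?thesis
    by (simp add: G_def W_def h_def)
qed

lemma real_less_Suc_div_mult: "0 < m \<Longrightarrow> real n < (real (n div m) + 1) * real m"
proof -
  assume "0 < m"
  then have "n < n div m * m + m"
    using div_mult_mod_eq[of n m] mod_less_divisor[of m n] by linarith
  then have "real n < real (n div m * m + m)"
    by (simp only: of_nat_less_iff)
  then show ?thesis
    by (simp add: algebra_simps)
qed

lemma noncentral_size_far_from_half:
  fixes \<epsilon> :: real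
  assumes d: "1 \<le> d" and \<epsilon>: "0 < \<epsilon>" "\<epsilon> \<le> 1"
    and T: "T = n div (8 * d * d)" and k: "k = 2 * d * T + 1"
    and far: "\<epsilon> * real k < 2 * real d * \<bar>real s - real (n div 2)\<bar>"
  shows "\<epsilon> / (8 * real d * real d) * real n \<le> \<bar>real s - real n / 2\<bar> + 2"
proof -
  have "real n < (real T + 1) * (8 * real d * real d)"
    using real_less_Suc_div_mult[of "8 * d * d" n] d by (simp add: T)
  then have "\<epsilon> * real n < \<epsilon> * ((real T + 1) * (8 * real d * real d))"
    using \<epsilon>(1) by simp
  then have "\<epsilon> / (8 * real d * real d) * real n < \<epsilon> * real T + \<epsilon>"
    using d by (simp add: field_simps)
  moreover have "2 * real d * (\<epsilon> * real T) \<le> \<epsilon> * real k"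
    using \<epsilon>(1) by (simp add: k algebra_simps)
  with far have "2 * real d * (\<epsilon> * real T) < 2 * real d * \<bar>real s - real (n div 2)\<bar>"
    by linarith
  then have "\<epsilon> * real T < \<bar>real s - real (n div 2)\<bar>"
    by (rule mult_left_less_imp_less) simp
  moreover have "\<bar>real (n div 2) - real n / 2\<bar> \<le> 1 / 2"
    by simp
  ultimately show ?thesis
    using \<epsilon>(2) by linarith
qed

lemma card_family_le_sum_binomial:
  assumes "F \<subseteq> cube n" "\<And>S. S \<in> F \<Longrightarrow> P (card S)"
  shows "card F \<le> (\<Sum>s | s \<le> n \<and> P s. n choose s)"
proof -
  have "F \<subseteq> {S. S \<subseteq> {..<n} \<and> P (card S)}"
    using assms by (auto simp: cube_def atLeast0LessThan)
  moreover have "finite {S. S \<subseteq> {..<n} \<and> P (card S)}"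
    by (rule finite_subset[of _ "Pow {..<n}"]) auto
  ultimately have "card F \<le> card {S. S \<subseteq> {..<n} \<and> P (card S)}"
    by (rule card_mono[rotated])
  also have "\<dots> = (\<Sum>s | s \<le> n \<and> P s. n choose s)"
    using card_subsets_with_card[of "{..<n}" P] by simp
  finally show ?thesis .
qed

lemma card_free_family_le:
  fixes F :: "nat set set" and c \<epsilon> :: real
  assumes d: "1 \<le> d" and \<epsilon>: "0 < \<epsilon>" "\<epsilon> \<le> 1"
    and T: "T = n div (8 * d * d)" and k: "k = 2 * d * T + 1"
    and F: "F \<subseteq> cube n"
    and pullback: "\<And>p. p permutes {..<n} \<Longrightarrow>
      card {x \<in> grid k d. p ` grid_embed (n div 2 - d * d * T) k x \<in> F} \<le> L"
    and L: "real L \<le> (c + \<epsilon>) * real (width_grid k d)"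
    and tail: "(\<Sum>s | s \<le> n \<and> \<epsilon> / (8 * real d * real d) * real n \<le> \<bar>real s - real n / 2\<bar> + 2.
      real (n choose s)) \<le> \<epsilon> * real (n choose (n div 2))"
  shows "real (card F) \<le> ((c + \<epsilon>) / (1 - \<epsilon> / 2) + \<epsilon>) * real (n choose (n div 2))"
proof -
  define central where
    "central s \<longleftrightarrow> 2 * real d * \<bar>real s - real (n div 2)\<bar> \<le> \<epsilon> * real k" for s :: nat
  define W where "W = real (width_grid k d)"
  define b where "b = real (n choose (n div 2))"
  have "T * (8 * d * d) \<le> n"
    unfolding T by (rule div_times_less_eq_dividend)
  then have n: "8 * (d * d * T) \<le> n"
    by (simp add: algebra_simps)
  have "0 < W"
    using width_grid_pos[of k d] by (simp add: W_def k)
  have "real (card {S \<in> F. central (card S)}) * ((1 - \<epsilon> / 2) * W) \<le> real L * b"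
    using card_central_subfamily_le[OF d \<epsilon>(2) n k F pullback] by (simp add: central_def W_def b_def)
  also have "\<dots> \<le> (c + \<epsilon>) * W * b"
    using mult_right_mono[OF L, of b] by (simp add: W_def b_def)
  finally have "(real (card {S \<in> F. central (card S)}) * (1 - \<epsilon> / 2)) * W \<le> ((c + \<epsilon>) * b) * W"
    by (simp add: algebra_simps)
  then have "real (card {S \<in> F. central (card S)}) * (1 - \<epsilon> / 2) \<le> (c + \<epsilon>) * b"
    using \<open>0 < W\<close> by (rule mult_right_le_imp_le)
  then have central_part: "real (card {S \<in> F. central (card S)}) \<le> (c + \<epsilon>) / (1 - \<epsilon> / 2) * b"
    using \<epsilon> by (simp add: pos_le_divide_eq)
  have "card {S \<in> F. \<not> central (card S)}
      \<le> (\<Sum>s | s \<le> n \<and> \<epsilon> / (8 * real d * real d) * real n \<le> \<bar>real s - real n / 2\<bar> + 2. n choose s)"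
    using F noncentral_size_far_from_half[OF d \<epsilon> T k]
    by (intro card_family_le_sum_binomial) (auto simp: central_def)
  then have "real (card {S \<in> F. \<not> central (card S)})
      \<le> (\<Sum>s | s \<le> n \<and> \<epsilon> / (8 * real d * real d) * real n \<le> \<bar>real s - real n / 2\<bar> + 2. real (n choose s))"
    by (simp only: of_nat_le_iff of_nat_sum[symmetric])
  with tail have noncentral_part: "real (card {S \<in> F. \<not> central (card S)}) \<le> \<epsilon> * b"
    by (simp add: b_def)
  have "finite F"
    using F finite_subset by (auto simp: cube_def)
  then have "card F = card {S \<in> F. central (card S)} + card {S \<in> F. \<not> central (card S)}"
    by (subst card_Un_disjoint[symmetric]) (auto intro: arg_cong[where f = card])
  with central_part noncentral_part show ?thesis
    by (simp add: b_def algebra_simps)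
qed

lemma Sup_free_family_le:
  fixes E :: "nat set set \<Rightarrow> bool" and c \<epsilon> :: real
  assumes d: "1 \<le> d" and \<epsilon>: "0 < \<epsilon>" "\<epsilon> \<le> 1" and c: "0 \<le> c"
    and T: "T = n div (8 * d * d)" and k: "k = 2 * d * T + 1"
    and pullback: "\<And>F p. \<not> E F \<Longrightarrow> p permutes {..<n} \<Longrightarrow>
      card {x \<in> grid k d. p ` grid_embed (n div 2 - d * d * T) k x \<in> F} \<le> L"
    and L: "real L \<le> (c + \<epsilon>) * real (width_grid k d)"
    and tail: "(\<Sum>s | s \<le> n \<and> \<epsilon> / (8 * real d * real d) * real n \<le> \<bar>real s - real n / 2\<bar> + 2.
      real (n choose s)) \<le> \<epsilon> * real (n choose (n div 2))"
  shows "real (Sup (card ` {F. F \<subseteq> cube n \<and> \<not> E F}))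
    \<le> ((c + \<epsilon>) / (1 - \<epsilon> / 2) + \<epsilon>) * real (n choose (n div 2))"
  using card_free_family_le[OF d \<epsilon> T k _ pullback L tail] c \<epsilon>
  by (intro Sup_card_free_le) (auto simp: cube_def)

lemma divide_one_minus_half_add_le:
  fixes c \<epsilon> :: real
  assumes "0 \<le> c" "0 \<le> \<epsilon>" "\<epsilon> \<le> 1"
  shows "(c + \<epsilon>) / (1 - \<epsilon> / 2) + \<epsilon> \<le> c + \<epsilon> * (c + 3)"
proof -
  have "1 \<le> (1 + \<epsilon>) * (1 - \<epsilon> / 2)"
    using assms mult_left_mono[OF assms(3) assms(2)] by (simp add: algebra_simps)
  then have "(c + \<epsilon>) * 1 \<le> (c + \<epsilon>) * ((1 + \<epsilon>) * (1 - \<epsilon> / 2))"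
    using assms by (intro mult_left_mono) simp_all
  then have "(c + \<epsilon>) / (1 - \<epsilon> / 2) \<le> (c + \<epsilon>) * (1 + \<epsilon>)"
    using assms by (simp add: divide_le_eq ac_simps)
  also have "\<dots> \<le> c + \<epsilon> * (c + 2)"
    using mult_left_mono[OF assms(3) assms(2)] by (simp add: algebra_simps)
  finally show ?thesis
    by (simp add: algebra_simps)
qed

lemma filterlim_grid_side:
  assumes "1 \<le> d"
  shows "filterlim (\<lambda>n. 2 * d * (n div (8 * d * d)) + 1) at_top sequentially"
  unfolding filterlim_at_top
proof
  fix K :: nat
  have "K \<le> 2 * d * (n div (8 * d * d)) + 1" if "8 * d * d * K \<le> n" for n
  proof -
    have "K = (8 * d * d * K) div (8 * d * d)"
      using assms by simp
    also have "\<dots> \<le> n div (8 * d * d)"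
      using that by (rule div_le_mono)
    also have "\<dots> \<le> d * (n div (8 * d * d))"
      using assms by simp
    also have "\<dots> \<le> 2 * d * (n div (8 * d * d)) + 1"
      by simp
    finally show ?thesis .
  qed
  then show "eventually (\<lambda>n. K \<le> 2 * d * (n div (8 * d * d)) + 1) sequentially"
    unfolding eventually_sequentially by blast
qed

text \<open>
  The grid side \<open>k \<approx> n/(4d)\<close> is small enough for \<open>[k]^d\<close> to fit into the middle levels of \<open>Q\<^sub>n\<close>
  and large enough for the sizes outside the central window to be negligible.
\<close>
lemma limsup_free_family_le:
  fixes Lg :: "nat \<Rightarrow> nat" and E :: "nat \<Rightarrow> nat set set \<Rightarrow> bool" and c :: real
  assumes d: "1 \<le> d" and c: "0 \<le> c"
    and hyp: "limsup (\<lambda>k. ereal (real (Lg k) / real (width_grid k d))) \<le> ereal c"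
    and pullback: "\<And>n k a F p. \<not> E n F \<Longrightarrow> inj p \<Longrightarrow>
      card {x \<in> grid k d. p ` grid_embed a k x \<in> F} \<le> Lg k"
  shows "limsup (\<lambda>n. ereal (real (Sup (card ` {F. F \<subseteq> cube n \<and> \<not> E n F})) / real (n choose (n div 2))))
    \<le> ereal c"
proof (rule ereal_le_epsilon2)
  fix e :: real assume "0 < e"
  define \<epsilon> where "\<epsilon> = min 1 (e / (c + 3))"
  have \<epsilon>: "0 < \<epsilon>" "\<epsilon> \<le> 1" "\<epsilon> * (c + 3) \<le> e"
    using \<open>0 < e\<close> c by (auto simp: \<epsilon>_def min_def le_divide_eq)
  then have bound: "(c + \<epsilon>) / (1 - \<epsilon> / 2) + \<epsilon> \<le> c + e"
    using divide_one_minus_half_add_le[OF c, of \<epsilon>] by simp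
  define T where "T n = n div (8 * d * d)" for n
  define k where "k n = 2 * d * T n + 1" for n
  have "limsup (\<lambda>k. ereal (real (Lg k) / real (width_grid k d))) < ereal (c + \<epsilon>)"
    using hyp \<epsilon>(1) by (simp add: le_less_trans)
  then have "eventually (\<lambda>k. ereal (real (Lg k) / real (width_grid k d)) < ereal (c + \<epsilon>)) sequentially"
    by (rule Limsup_lessD)
  then have "eventually (\<lambda>n. real (Lg (k n)) / real (width_grid (k n) d) < c + \<epsilon>) sequentially"
    using eventually_compose_filterlim filterlim_grid_side[OF d] unfolding k_def T_def by fastforce
  moreover have "eventually (\<lambda>n.
      (\<Sum>s | s \<le> n \<and> \<epsilon> / (8 * real d * real d) * real n \<le> \<bar>real s - real n / 2\<bar> + 2. real (n choose s))
        \<le> \<epsilon> * real (n choose (n div 2))) sequentially"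
    using \<epsilon>(1) d by (intro eventually_binomial_tail_le) simp_all
  ultimately have "eventually (\<lambda>n. ereal (real (Sup (card ` {F. F \<subseteq> cube n \<and> \<not> E n F})) /
      real (n choose (n div 2))) \<le> ereal c + ereal e) sequentially"
  proof eventually_elim
    case (elim n)
    have "real (Lg (k n)) \<le> (c + \<epsilon>) * real (width_grid (k n) d)"
      using elim(1) width_grid_pos[of "k n" d] by (simp add: k_def pos_divide_less_eq less_imp_le)
    then have "real (Sup (card ` {F. F \<subseteq> cube n \<and> \<not> E n F}))
        \<le> ((c + \<epsilon>) / (1 - \<epsilon> / 2) + \<epsilon>) * real (n choose (n div 2))"
      using Sup_free_family_le[OF d \<epsilon>(1,2) c T_def k_def _ _ elim(2)] pullback permutes_inj by blast
    also have "\<dots> \<le> (c + e) * real (n choose (n div 2))"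
      using bound by (simp add: mult_right_mono)
    finally show ?case
      by (simp add: divide_le_eq)
  qed
  then show "limsup (\<lambda>n. ereal (real (Sup (card ` {F. F \<subseteq> cube n \<and> \<not> E n F})) /
      real (n choose (n div 2)))) \<le> ereal c + ereal e"
    by (rule Limsup_bounded)
qed

theorem corollary1p4:
  fixes d :: nat and P :: "'a set" and leP :: "'a \<Rightarrow> 'a \<Rightarrow> bool" and c :: real
  assumes "d > 0" and "finite_poset P leP" and "c \<ge> 0"
  shows "(limsup (\<lambda>k. ereal (real (La_poset (grid k d) grid_le P leP) / real (width_grid k d))) \<le> ereal c
            \<longrightarrow> limsup (\<lambda>n. ereal (real (La n P leP) / real (n choose (n div 2)))) \<le> ereal c)
       \<and> (limsup (\<lambda>k. ereal (real (La_star_poset (grid k d) grid_le P leP) / real (width_grid k d))) \<le> ereal c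
            \<longrightarrow> limsup (\<lambda>n. ereal (real (La_star n P leP) / real (n choose (n div 2)))) \<le> ereal c)"
proof -
  have d: "1 \<le> d"
    using assms(1) by simp
  show ?thesis
  proof (intro conjI impI)
    assume "limsup (\<lambda>k. ereal (real (La_poset (grid k d) grid_le P leP) / real (width_grid k d))) \<le> ereal c"
    then have "limsup (\<lambda>n. ereal (real (Sup (card ` {F. F \<subseteq> cube n \<and> \<not> weak_subposet P leP F (\<subseteq>)}))
        / real (n choose (n div 2)))) \<le> ereal c"
      by (rule limsup_free_family_le[OF d assms(3)]) (rule card_grid_preimage_le_La_poset)
    then show "limsup (\<lambda>n. ereal (real (La n P leP) / real (n choose (n div 2)))) \<le> ereal c"
      unfolding La_def La_poset_def .
  next
    assume "limsup (\<lambda>k. ereal (real (La_star_poset (grid k d) grid_le P leP) / real (width_grid k d))) \<le> ereal c"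
    then have "limsup (\<lambda>n. ereal (real (Sup (card ` {F. F \<subseteq> cube n \<and> \<not> strong_subposet P leP F (\<subseteq>)}))
        / real (n choose (n div 2)))) \<le> ereal c"
      by (rule limsup_free_family_le[OF d assms(3)]) (rule card_grid_preimage_le_La_star_poset)
    then show "limsup (\<lambda>n. ereal (real (La_star n P leP) / real (n choose (n div 2)))) \<le> ereal c"
      unfolding La_star_def La_star_poset_def .
  qed
qed

end
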